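(* Assume (A1). Let $\delta>0$, $\beta>0$, and $\mathcal R=\{r_1,\dots,r_m\}$ with positive integers $r_1<\dots<r_m\le t$. Suppose the event $E$ described in the context holds. Then for every $1\le k\le m-1$, $$\lVert\hat{\bm C}^{[r_k]}(t)-\hat{\bm C}^{[r_{k+1}]}(t)\rVert_\infty\le\mathcal T(k)\ \Longrightarrow\ \mathcal B(r_{k+1})\le\mathcal B(r_k).$$
   Context: For matrices $\lVert\bm M\rVert_\infty=\max_{i,j}|M_{ij}|$. Let $\ell_1,\dots,\ell_n:\mathbb{R}^d\to\{-1,1\}$ be functions and $X_1,X_2,\dots$ random inputs with $X_k\sim D_k$; (A1): for every finite $t$, $(X_1,\dots,X_t)\sim\prod_{k=1}^tD_k$. Correlation matrix $C_{ij}(k)=\mathbb{E}_{X\sim D_k}[\ell_i(X)\ell_j(X)]$; $\bm C^{[r]}(t)=\frac1r\sum_{k=t-r+1}^t\bm C(k)$; $\hat{\bm C}^{[r]}(t)=\frac1r\sum_{k=t-r+1}^t\bm v_k\bm v_k^T$ with $\bm v_k=(\ell_1(X_k),\dots,\ell_n(X_k))^T$. Let $A_{\delta,n,m}=\sqrt{2\ln[(2m-1)n(n-1)/\delta]}$ and $\gamma_M=\max_{1\le k\le m-1}\sqrt{r_k/r_{k+1}}$. Define $\mathcal B(r)=\frac{A_{\delta,n,m}}{\sqrt r}\cdot\frac{2\beta+2}{1-\gamma_M}+\lVert\bm C(t)-\bm C^{[r]}(t)\rVert_\infty$ and, for $k\le m-1$, $\mathcal T(k)=\frac{2\beta A_{\delta,n,m}}{\sqrt{r_k}}+A_{\delta,n,m}\sqrt{\frac{1-r_k/r_{k+1}}{r_k}}$.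 The event $E$: for all $k\le m$, $\lVert\bm C(t)-\hat{\bm C}^{[r_k]}(t)\rVert_\infty\le\frac{A_{\delta,n,m}}{\sqrt{r_k}}+\lVert\bm C(t)-\bm C^{[r_k]}(t)\rVert_\infty$, and for all $k\le m-1$, $\lVert\bm C^{[r_k]}(t)-\bm C^{[r_{k+1}]}(t)-\hat{\bm C}^{[r_k]}(t)+\hat{\bm C}^{[r_{k+1}]}(t)\rVert_\infty\le A_{\delta,n,m}\sqrt{\frac{1-r_k/r_{k+1}}{r_k}}$. *)

theory Defs
  imports "HOL-Probability.Probability"
begin

text \<open>n x n matrices indexed by 1..n are represented as functions nat => nat => real.\<close>

definition mat_inf_norm :: "nat \<Rightarrow> (nat \<Rightarrow> nat \<Rightarrow> real) \<Rightarrow> real" where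
  "mat_inf_norm n M = Max (insert 0 {\<bar>M i j\<bar> | i j. i \<in> {1..n} \<and> j \<in> {1..n}})"

definition corr :: "(nat \<Rightarrow> 'a measure) \<Rightarrow> (nat \<Rightarrow> 'a \<Rightarrow> real) \<Rightarrow> nat \<Rightarrow> nat \<Rightarrow> nat \<Rightarrow> real" where
  "corr D l k i j = (\<integral>x. l i x * l j x \<partial>(D k))"

definition corr_avg :: "(nat \<Rightarrow> 'a measure) \<Rightarrow> (nat \<Rightarrow> 'a \<Rightarrow> real) \<Rightarrow> nat \<Rightarrow> nat \<Rightarrow> nat \<Rightarrow> nat \<Rightarrow> real" where
  "corr_avg D l r t i j = (1 / real r) * (\<Sum>k\<in>{t - r + 1..t}. corr D l k i j)"

definition corr_emp :: "(nat \<Rightarrow> 'a) \<Rightarrow> (nat \<Rightarrow> 'a \<Rightarrow> real) \<Rightarrow> nat \<Rightarrow> nat \<Rightarrow> nat \<Rightarrow> nat \<Rightarrow> real" where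
  "corr_emp x l r t i j = (1 / real r) * (\<Sum>k\<in>{t - r + 1..t}. l i (x k) * l j (x k))"

definition A_const :: "real \<Rightarrow> nat \<Rightarrow> nat \<Rightarrow> real" where
  "A_const \<delta> n m = sqrt (2 * ln ((2 * real m - 1) * real n * (real n - 1) / \<delta>))"

definition gammaM :: "(nat \<Rightarrow> nat) \<Rightarrow> nat \<Rightarrow> real" where
  "gammaM r m = Max ((\<lambda>k. sqrt (real (r k) / real (r (k + 1)))) ` {1..m - 1})"

definition B_bound :: "(nat \<Rightarrow> 'a measure) \<Rightarrow> (nat \<Rightarrow> 'a \<Rightarrow> real) \<Rightarrow> nat \<Rightarrow> real \<Rightarrow> real
     \<Rightarrow> (nat \<Rightarrow> nat) \<Rightarrow> nat \<Rightarrow> nat \<Rightarrow> nat \<Rightarrow> real" where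
  "B_bound D l n \<delta> \<beta> rs m t r =
     A_const \<delta> n m / sqrt (real r) * (2 * \<beta> + 2) / (1 - gammaM rs m)
     + mat_inf_norm n (\<lambda>i j. corr D l t i j - corr_avg D l r t i j)"

definition T_bound :: "nat \<Rightarrow> real \<Rightarrow> real \<Rightarrow> (nat \<Rightarrow> nat) \<Rightarrow> nat \<Rightarrow> nat \<Rightarrow> real" where
  "T_bound n \<delta> \<beta> rs m k =
     2 * \<beta> * A_const \<delta> n m / sqrt (real (rs k))
     + A_const \<delta> n m * sqrt ((1 - real (rs k) / real (rs (k + 1))) / real (rs k))"

text \<open>The event E, evaluated at the realised inputs x.\<close>
definition event_E :: "(nat \<Rightarrow> 'a measure) \<Rightarrow> (nat \<Rightarrow> 'a \<Rightarrow> real) \<Rightarrow> (nat \<Rightarrow> 'a) \<Rightarrow> nat \<Rightarrow> real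
     \<Rightarrow> (nat \<Rightarrow> nat) \<Rightarrow> nat \<Rightarrow> nat \<Rightarrow> bool" where
  "event_E D l x n \<delta> rs m t \<longleftrightarrow>
     (\<forall>k\<in>{1..m}. mat_inf_norm n (\<lambda>i j. corr D l t i j - corr_emp x l (rs k) t i j)
        \<le> A_const \<delta> n m / sqrt (real (rs k))
          + mat_inf_norm n (\<lambda>i j. corr D l t i j - corr_avg D l (rs k) t i j)) \<and>
     (\<forall>k\<in>{1..m - 1}. mat_inf_norm n (\<lambda>i j. corr_avg D l (rs k) t i j - corr_avg D l (rs (k + 1)) t i j
            - corr_emp x l (rs k) t i j + corr_emp x l (rs (k + 1)) t i j)
        \<le> A_const \<delta> n m * sqrt ((1 - real (rs k) / real (rs (k + 1))) / real (rs k)))"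

end

theory Submission
  imports Defs
begin

text \<open>On the event \<open>E\<close> the claim is deterministic.
  If the empirical test passes, the two clauses of \<open>E\<close> bound the drift
  \<open>\<parallel>C^[r_k](t) - C^[r_(k+1)](t)\<parallel>\<close> by \<open>T(k)\<close> plus the deviation term of \<open>E\<close>, hence by
  \<open>(2\<beta> + 2) A / sqrt r_k\<close>, and by the triangle inequality the bias part of \<open>B\<close> grows by at most that
  much from \<open>r_k\<close> to \<open>r_(k+1)\<close>. The variance part shrinks by at least as much, since
  \<open>1 / sqrt r_(k+1) \<le> \<gamma>_M / sqrt r_k\<close> and \<open>\<gamma>_M / (1 - \<gamma>_M) + 1 = 1 / (1 - \<gamma>_M)\<close>.\<close>

lemma mat_inf_norm_eq_Max_image:
  "mat_inf_norm n M = Max (insert 0 ((\<lambda>(i, j). \<bar>M i j\<bar>) ` ({1..n} \<times> {1..n})))"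
proof -
  have "{\<bar>M i j\<bar> | i j. i \<in> {1..n} \<and> j \<in> {1..n}} = (\<lambda>(i, j). \<bar>M i j\<bar>) ` ({1..n} \<times> {1..n})"
    by force
  then show ?thesis
    by (simp add: mat_inf_norm_def)
qed

lemma mat_inf_norm_nonneg: "0 \<le> mat_inf_norm n M"
  by (simp add: mat_inf_norm_eq_Max_image)

lemma abs_entry_le_mat_inf_norm:
  assumes "i \<in> {1..n}" "j \<in> {1..n}"
  shows "\<bar>M i j\<bar> \<le> mat_inf_norm n M"
  unfolding mat_inf_norm_eq_Max_image by (rule Max_ge) (use assms in auto)

lemma mat_inf_norm_le:
  assumes "0 \<le> b" "\<And>i j. i \<in> {1..n} \<Longrightarrow> j \<in> {1..n} \<Longrightarrow> \<bar>M i j\<bar> \<le> b"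
  shows "mat_inf_norm n M \<le> b"
  using assms by (auto simp: mat_inf_norm_eq_Max_image)

lemma mat_inf_norm_add_le:
  "mat_inf_norm n (\<lambda>i j. M i j + N i j) \<le> mat_inf_norm n M + mat_inf_norm n N"
proof (rule mat_inf_norm_le)
  show "0 \<le> mat_inf_norm n M + mat_inf_norm n N"
    by (simp add: mat_inf_norm_nonneg add_nonneg_nonneg)
next
  fix i j assume "i \<in> {1..n}" "j \<in> {1..n}"
  then have "\<bar>M i j\<bar> \<le> mat_inf_norm n M" "\<bar>N i j\<bar> \<le> mat_inf_norm n N"
    by (simp_all add: abs_entry_le_mat_inf_norm)
  then show "\<bar>M i j + N i j\<bar> \<le> mat_inf_norm n M + mat_inf_norm n N"
    by linarith
qed

lemma mat_inf_norm_diff_triangle: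
  "mat_inf_norm n (\<lambda>i j. M i j - P i j)
     \<le> mat_inf_norm n (\<lambda>i j. M i j - N i j) + mat_inf_norm n (\<lambda>i j. N i j - P i j)"
  using mat_inf_norm_add_le[of n "\<lambda>i j. M i j - N i j" "\<lambda>i j. N i j - P i j"] by simp

lemma mat_inf_norm_drift_le:
  assumes "mat_inf_norm n (\<lambda>i j. Q i j - Q' i j) \<le> a"
    and "mat_inf_norm n (\<lambda>i j. P i j - P' i j - Q i j + Q' i j) \<le> b"
  shows "mat_inf_norm n (\<lambda>i j. P i j - P' i j) \<le> a + b"
proof -
  have "(\<lambda>i j. P i j - P' i j) = (\<lambda>i j. (Q i j - Q' i j) + (P i j - P' i j - Q i j + Q' i j))"
    by (simp add: fun_eq_iff)
  then show ?thesis
    using mat_inf_norm_add_le[of n "\<lambda>i j. Q i j - Q' i j" "\<lambda>i j. P i j - P' i j - Q i j + Q' i j"]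
      assms by simp
qed

lemma inverse_sqrt_le_of_sqrt_ratio_le:
  fixes r r' \<gamma> :: real
  assumes "0 < r" "0 < r'" "sqrt (r / r') \<le> \<gamma>"
  shows "1 / sqrt r' \<le> \<gamma> / sqrt r"
proof -
  have "1 / sqrt r' = sqrt (r / r') / sqrt r"
    using assms by (simp add: real_sqrt_divide)
  also have "\<dots> \<le> \<gamma> / sqrt r"
    using assms by (simp add: divide_right_mono)
  finally show ?thesis .
qed

lemma geometric_variance_step:
  fixes r r' \<gamma> c :: real
  assumes "0 < r" "0 < r'" "sqrt (r / r') \<le> \<gamma>" "\<gamma> < 1" "0 \<le> c"
  shows "c / sqrt r' / (1 - \<gamma>) + c / sqrt r \<le> c / sqrt r / (1 - \<gamma>)"
proof -
  have "c * (1 / sqrt r') \<le> c * (\<gamma> / sqrt r)"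
    using inverse_sqrt_le_of_sqrt_ratio_le[OF assms(1-3)] assms(5) by (rule mult_left_mono)
  from divide_right_mono[OF this, of "1 - \<gamma>"]
  have "c / sqrt r' / (1 - \<gamma>) \<le> c * (\<gamma> / sqrt r) / (1 - \<gamma>)"
    using assms(4) by simp
  also have "\<dots> + c / sqrt r = c / sqrt r / (1 - \<gamma>)"
    using assms(1,4) by (simp add: field_simps)
  finally show ?thesis
    by linarith
qed

lemma sqrt_one_minus_ratio_div_le:
  fixes r r' :: real
  assumes "0 < r" "0 < r'"
  shows "sqrt ((1 - r / r') / r) \<le> 1 / sqrt r"
proof -
  have "(1 - r / r') / r \<le> 1 / r"
    using assms by (simp add: divide_right_mono)
  then show ?thesis
    by (metis real_sqrt_divide real_sqrt_le_mono real_sqrt_one)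
qed

lemma strict_mono_window_pos:
  fixes rs :: "nat \<Rightarrow> nat"
  assumes "1 \<le> rs 1" "\<And>k. k \<in> {1..m - 1} \<Longrightarrow> rs k < rs (k + 1)" "k \<in> {1..m - 1}"
  shows "0 < rs k"
proof (cases "k = 1")
  case False
  with assms(3) have "k - 1 \<in> {1..m - 1}" and "k - 1 + 1 = k"
    by auto
  then show ?thesis
    using assms(2)[of "k - 1"] by simp
qed (use assms(1) in simp)

lemma ratio_le_gammaM:
  assumes "k \<in> {1..m - 1}"
  shows "sqrt (real (rs k) / real (rs (k + 1))) \<le> gammaM rs m"
  unfolding gammaM_def using assms by (intro Max_ge) auto

lemma gammaM_less_one:
  assumes "\<And>k. k \<in> {1..m - 1} \<Longrightarrow> rs k < rs (k + 1)" "{1..m - 1} \<noteq> {}"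
  shows "gammaM rs m < 1"
proof -
  have "sqrt (real (rs k) / real (rs (k + 1))) < 1" if "k \<in> {1..m - 1}" for k
    using assms(1)[OF that] by simp
  then show ?thesis
    unfolding gammaM_def using assms(2) by (subst Max_less_iff) auto
qed

\<comment> \<open>\<open>sqrt\<close> is negative on negative arguments, so \<open>0 \<le> A\<close> has to be read off from \<open>E\<close>.\<close>
lemma A_const_nonneg_if_event_E:
  assumes "event_E D l x n \<delta> rs m t" "k \<in> {1..m - 1}" "0 < rs k" "rs k < rs (k + 1)"
  shows "0 \<le> A_const \<delta> n m"
proof -
  define s where "s = sqrt ((1 - real (rs k) / real (rs (k + 1))) / real (rs k))"
  have "0 < s"
    using assms(3,4) by (simp add: s_def field_simps)
  moreover have "0 \<le> A_const \<delta> n m * s"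
    using assms(1,2) mat_inf_norm_nonneg order_trans unfolding event_E_def s_def by blast
  ultimately show ?thesis
    by (simp add: zero_le_mult_iff)
qed

lemma T_bound_plus_deviation_le:
  assumes "0 < rs k" "0 < rs (k + 1)" "0 \<le> A_const \<delta> n m"
  shows "T_bound n \<delta> \<beta> rs m k
           + A_const \<delta> n m * sqrt ((1 - real (rs k) / real (rs (k + 1))) / real (rs k))
         \<le> A_const \<delta> n m * (2 * \<beta> + 2) / sqrt (real (rs k))"
proof -
  define A where "A = A_const \<delta> n m"
  define r where "r = real (rs k)"
  have "A * sqrt ((1 - r / real (rs (k + 1))) / r) \<le> A * (1 / sqrt r)"
    using mult_left_mono[OF sqrt_one_minus_ratio_div_le assms(3)] assms(1,2) by (simp add: A_def r_def)
  moreover have "A * (2 * \<beta> + 2) / sqrt r = 2 * \<beta> * A / sqrt r + 2 * (A * (1 / sqrt r))"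
    by (simp add: algebra_simps add_divide_distrib)
  ultimately show ?thesis
    by (simp add: T_bound_def flip: A_def r_def)
qed

lemma B_bound_le_if_drift_le:
  fixes r r' :: nat
  assumes "0 < r" "0 < r'" "sqrt (real r / real r') \<le> gammaM rs m" "gammaM rs m < 1"
    and "0 \<le> A_const \<delta> n m" "0 \<le> \<beta>"
    and "mat_inf_norm n (\<lambda>i j. corr_avg D l r t i j - corr_avg D l r' t i j)
           \<le> A_const \<delta> n m * (2 * \<beta> + 2) / sqrt (real r)"
  shows "B_bound D l n \<delta> \<beta> rs m t r' \<le> B_bound D l n \<delta> \<beta> rs m t r"
proof -
  define A where "A = A_const \<delta> n m"
  define \<gamma> where "\<gamma> = gammaM rs m"
  have "A * (2 * \<beta> + 2) / sqrt r' / (1 - \<gamma>) + A * (2 * \<beta> + 2) / sqrt r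
      \<le> A * (2 * \<beta> + 2) / sqrt r / (1 - \<gamma>)"
    using geometric_variance_step[of r r' \<gamma> "A * (2 * \<beta> + 2)"] assms
    by (simp add: A_def \<gamma>_def)
  then show ?thesis
    using mat_inf_norm_diff_triangle[of n "corr D l t" "corr_avg D l r' t" "corr_avg D l r t"] assms(7)
    by (simp add: B_bound_def mult.commute mult.left_commute flip: A_def \<gamma>_def)
qed

theorem proposition7:
  fixes M :: "'w measure"
    and D :: "nat \<Rightarrow> 'a::euclidean_space measure"
    and X :: "nat \<Rightarrow> 'w \<Rightarrow> 'a"
    and l :: "nat \<Rightarrow> 'a \<Rightarrow> real"
    and n m t :: nat and rs :: "nat \<Rightarrow> nat"
    and \<delta> \<beta> :: real and \<omega> :: 'w
  assumes "prob_space M"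
    and "\<And>k. prob_space (D k)"
    and "\<And>k. sets (D k) = sets borel"
    and "\<And>k. X k \<in> borel_measurable M"
    and "\<And>i x. i \<in> {1..n} \<Longrightarrow> l i x \<in> {-1, 1}"
    and A1: "\<And>s. distr M (PiM {1..s} (\<lambda>_. borel)) (\<lambda>w. \<lambda>k\<in>{1..s}. X k w) = PiM {1..s} D"
    and "\<delta> > 0" and "\<beta> > 0"
    and "m \<ge> 1"
    and "rs 1 \<ge> 1"
    and "\<And>k. k \<in> {1..m - 1} \<Longrightarrow> rs k < rs (k + 1)"
    and "rs m \<le> t"
    and "\<omega> \<in> space M"
    and "event_E D l (\<lambda>k. X k \<omega>) n \<delta> rs m t"
  shows "\<forall>k\<in>{1..m - 1}.
           mat_inf_norm n (\<lambda>i j. corr_emp (\<lambda>k. X k \<omega>) l (rs k) t i j - corr_emp (\<lambda>k. X k \<omega>) l (rs (k + 1)) t i j)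
             \<le> T_bound n \<delta> \<beta> rs m k
           \<longrightarrow> B_bound D l n \<delta> \<beta> rs m t (rs (k + 1)) \<le> B_bound D l n \<delta> \<beta> rs m t (rs k)"
proof (intro ballI impI)
  fix k assume k: "k \<in> {1..m - 1}"
  define A where "A = A_const \<delta> n m"
  define s where "s = sqrt ((1 - real (rs k) / real (rs (k + 1))) / real (rs k))"
  define Ce where "Ce = (\<lambda>q. corr_emp (\<lambda>k. X k \<omega>) l q t)"
  define Ca where "Ca = (\<lambda>q. corr_avg D l q t)"
  assume "mat_inf_norm n (\<lambda>i j. corr_emp (\<lambda>k. X k \<omega>) l (rs k) t i j
            - corr_emp (\<lambda>k. X k \<omega>) l (rs (k + 1)) t i j) \<le> T_bound n \<delta> \<beta> rs m k"
  then have test: "mat_inf_norm n (\<lambda>i j. Ce (rs k) i j - Ce (rs (k + 1)) i j) \<le> T_bound n \<delta> \<beta> rs m k"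
    by (simp only: Ce_def)
  have deviation: "mat_inf_norm n (\<lambda>i j. Ca (rs k) i j - Ca (rs (k + 1)) i j
      - Ce (rs k) i j + Ce (rs (k + 1)) i j) \<le> A * s"
    using assms(14) k unfolding event_E_def Ca_def Ce_def A_def s_def by blast
  have r: "0 < rs k" "rs k < rs (k + 1)"
    using strict_mono_window_pos[OF assms(10,11) k] assms(11)[OF k] by simp_all
  have A: "0 \<le> A"
    using A_const_nonneg_if_event_E[OF assms(14) k r] by (simp add: A_def)
  have "mat_inf_norm n (\<lambda>i j. Ca (rs k) i j - Ca (rs (k + 1)) i j) \<le> T_bound n \<delta> \<beta> rs m k + A * s"
    using test deviation by (rule mat_inf_norm_drift_le)
  also have "\<dots> \<le> A * (2 * \<beta> + 2) / sqrt (real (rs k))"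
    using T_bound_plus_deviation_le[of rs k \<delta> n m \<beta>] r A by (simp add: A_def s_def)
  finally have drift: "mat_inf_norm n (\<lambda>i j. Ca (rs k) i j - Ca (rs (k + 1)) i j)
      \<le> A * (2 * \<beta> + 2) / sqrt (real (rs k))" .
  have "gammaM rs m < 1"
    using gammaM_less_one[of m rs] assms(11) k by blast
  show "B_bound D l n \<delta> \<beta> rs m t (rs (k + 1)) \<le> B_bound D l n \<delta> \<beta> rs m t (rs k)"
  proof (rule B_bound_le_if_drift_le)
    show "sqrt (real (rs k) / real (rs (k + 1))) \<le> gammaM rs m"
      using k by (rule ratio_le_gammaM)
  qed (use \<open>gammaM rs m < 1\<close> r A assms(8) drift in \<open>simp_all add: A_def Ca_def\<close>)
qed

end
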